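(* Let $N\ge1$, let $\xi_0,\dots,\xi_N$ be the LGL nodes on $[-1,1]$ with LGL weights $\omega_0,\dots,\omega_N$, $\mathcal{M}=\mathrm{diag}(\omega_0,\dots,\omega_N)$, and let $\mathcal{V}_{ij}=L_j(\xi_i)$ ($i,j=0,\dots,N$) be the Vandermonde matrix of the normalized Legendre polynomials $L_j=\sqrt{(2j+1)/2}\,P_j$. Let $\mathcal{C}=\mathrm{diag}(\sigma_0,\dots,\sigma_N)$ with $0\le\sigma_i\le1$ for all $i$ and $\sigma_N=0$, and let $\mathcal{F}=\mathcal{V}\mathcal{C}\mathcal{V}^{-1}$. Then $\mathcal{F}$ is contractive in the sense that $$\mathcal{F}^T\mathcal{M}\,\mathcal{F}-\mathcal{M}\le 0$$ (negative semidefinite), i.e. $\|\mathcal{F}\mathbf{U}\|_N\le\|\mathbf{U}\|_N$ for all $\mathbf{U}\in\mathbb{R}^{N+1}$, where $\|\mathbf{U}\|_N^2=\mathbf{U}^T\mathcal{M}\mathbf{U}$.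
   Context: The LGL nodes are $\xi_0=-1$, $\xi_N=1$ and the zeros of $P_N'$ (with $P_N$ the degree-$N$ Legendre polynomial); the LGL weights are $\omega_i=\frac{2}{N(N+1)P_N(\xi_i)^2}$. In the paper the entries $\sigma_i$ come from a filter function $\sigma:\mathbb{R}^+\to[0,1]$ (Vandeven) that vanishes for arguments $\ge1$, so the highest mode is clipped, $\sigma_N=0$. *)

theory Defs
  imports Complex_Main "HOL-Computational_Algebra.Polynomial"
    "Jordan_Normal_Form.Gauss_Jordan_Elimination"
begin

text \<open>Legendre polynomials P_n (standard normalisation P_n(1) = 1), via Bonnet's recurrence
  (n+1) P_{n+1} = (2n+1) x P_n - n P_{n-1}.\<close>
fun legendre :: "nat \<Rightarrow> real poly" where
  "legendre 0 = 1"
| "legendre (Suc 0) = [:0, 1:]"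
| "legendre (Suc (Suc n)) =
     Polynomial.smult (1 / real (n + 2))
       (Polynomial.smult (real (2 * n + 3)) ([:0, 1:] * legendre (Suc n)) - Polynomial.smult (real (n + 1)) (legendre n))"

definition norm_legendre :: "nat \<Rightarrow> real \<Rightarrow> real" where
  "norm_legendre j x = sqrt ((2 * real j + 1) / 2) * poly (legendre j) x"

definition lgl_nodes :: "nat \<Rightarrow> real list" where
  "lgl_nodes N = sorted_list_of_set
     ({-1, 1} \<union> {x. -1 < x \<and> x < 1 \<and> poly (pderiv (legendre N)) x = 0})"

definition lgl_node :: "nat \<Rightarrow> nat \<Rightarrow> real" where
  "lgl_node N i = lgl_nodes N ! i"

definition lgl_weight :: "nat \<Rightarrow> nat \<Rightarrow> real" where
  "lgl_weight N i = 2 / (real N * (real N + 1) * (poly (legendre N) (lgl_node N i))\<^sup>2)"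

definition lgl_mass :: "nat \<Rightarrow> real mat" where
  "lgl_mass N = mat (N + 1) (N + 1) (\<lambda>(i, j). if i = j then lgl_weight N i else 0)"

definition lgl_vandermonde :: "nat \<Rightarrow> real mat" where
  "lgl_vandermonde N = mat (N + 1) (N + 1) (\<lambda>(i, j). norm_legendre j (lgl_node N i))"

definition filter_mat :: "nat \<Rightarrow> (nat \<Rightarrow> real) \<Rightarrow> real mat" where
  "filter_mat N \<sigma> =
     lgl_vandermonde N * mat (N + 1) (N + 1) (\<lambda>(i, j). if i = j then \<sigma> i else 0)
       * the (mat_inverse (lgl_vandermonde N))"

end

(* The Gram matrix G = V^T M V of L_0, ..., L_N in the discrete LGL inner product is diagonal
   with positive diagonal. Writing U = V w, the quadratic form of F^T M F - M at U is therefore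
   sum_j G_jj (sigma_j^2 - 1) w_j^2 <= 0.

   Discrete orthogonality is obtained without quadrature exactness. The nodes are the roots of
   q = (1 - x^2) P_N'; they are N + 1 distinct points, because q is orthogonal to every polynomial
   of degree < N - 1 and hence P_N' changes sign N - 1 times in (-1, 1). Since q' = -N(N+1) P_N,
   the value P_N(x_i) is proportional to prod_{j <> i} (x_i - x_j), so sum_i g(x_i) / P_N(x_i) is
   a divided difference of order N of g and vanishes when deg g < N. At the nodes
   P_{N-1}(x_i) = x_i P_N(x_i), and running Bonnet's recurrence downwards gives
   P_k(x_i) = B(x_i) P_N(x_i) with deg B <= N - k. Hence for j < k <= N the sum
   sum_i P_j(x_i) P_k(x_i) / P_N(x_i)^2 = sum_i (P_j B)(x_i) / P_N(x_i) vanishes. *)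

theory Submission
  imports Defs "Jordan_Normal_Form.Determinant"
begin

section \<open>Legendre polynomials\<close>

lemma legendre_recurrence:
  "(real n + 2) * poly (legendre (Suc (Suc n))) x =
     (2 * real n + 3) * x * poly (legendre (Suc n)) x - (real n + 1) * poly (legendre n) x"
  by (simp add: field_simps)

lemma pderiv_legendre_recurrence:
  "(real n + 2) * poly (pderiv (legendre (Suc (Suc n)))) x =
     (2 * real n + 3) * (poly (legendre (Suc n)) x + x * poly (pderiv (legendre (Suc n))) x)
     - (real n + 1) * poly (pderiv (legendre n)) x"
  by (simp add: pderiv_smult pderiv_diff pderiv_mult pderiv_pCons field_simps)

lemma legendre_pderiv_identities:
  "x * poly (pderiv (legendre (Suc n))) x - poly (pderiv (legendre n)) x
     = (real n + 1) * poly (legendre (Suc n)) x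
   \<and> (x\<^sup>2 - 1) * poly (pderiv (legendre (Suc n))) x
     = (real n + 1) * (x * poly (legendre (Suc n)) x - poly (legendre n) x)"
proof (induction n)
  case 0
  then show ?case by (simp add: pderiv_pCons power2_eq_square)
next
  case (Suc n)
  define m where "m = real n"
  define a b c where "a = poly (legendre n) x" and "b = poly (legendre (Suc n)) x"
    and "c = poly (legendre (Suc (Suc n))) x"
  define da db dc where "da = poly (pderiv (legendre n)) x"
    and "db = poly (pderiv (legendre (Suc n))) x" and "dc = poly (pderiv (legendre (Suc (Suc n)))) x"
  have B: "x * db - da = (m + 1) * b" and C: "(x\<^sup>2 - 1) * db = (m + 1) * (x * b - a)"
    using Suc.IH unfolding a_def b_def da_def db_def m_def by auto
  have rec: "(m + 2) * c = (2 * m + 3) * x * b - (m + 1) * a"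
    using legendre_recurrence unfolding a_def b_def c_def m_def .
  have "(m + 2) * dc = (2 * m + 3) * (b + x * db) - (m + 1) * da"
    using pderiv_legendre_recurrence unfolding b_def da_def db_def dc_def m_def .
  also have "\<dots> = (m + 2) * (x * db + (m + 2) * b)"
    using B by (simp add: algebra_simps)
  finally have dc: "dc = x * db + (m + 2) * b"
    unfolding m_def by simp
  have "x * dc - db = (m + 2) * c"
    using C rec unfolding dc by (simp add: algebra_simps power2_eq_square)
  moreover have "(x\<^sup>2 - 1) * dc = (m + 2) * (x * c - b)"
  proof -
    have "(x\<^sup>2 - 1) * dc = x * ((x\<^sup>2 - 1) * db) + (m + 2) * (x\<^sup>2 - 1) * b"
      unfolding dc by (simp add: algebra_simps)
    also have "\<dots> = x * ((2 * m + 3) * x * b - (m + 1) * a) - (m + 2) * b"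
      unfolding C by (simp add: algebra_simps power2_eq_square)
    also have "\<dots> = (m + 2) * (x * c - b)"
      unfolding rec[symmetric] by (simp add: algebra_simps)
    finally show ?thesis .
  qed
  ultimately show ?case
    unfolding a_def b_def c_def db_def dc_def m_def by (simp add: add.commute)
qed

definition legendre_op :: "real poly \<Rightarrow> real poly" where
  "legendre_op p = pderiv ([:-1, 0, 1:] * pderiv p)"

lemma legendre_ode: "legendre_op (legendre n) = Polynomial.smult (real n * (real n + 1)) (legendre n)"
proof (cases n)
  case (Suc m)
  have B: "[:0, 1:] * pderiv (legendre (Suc m)) - pderiv (legendre m)
      = Polynomial.smult (real m + 1) (legendre (Suc m))" (is "?lB = ?rB")
    and C: "[:-1, 0, 1:] * pderiv (legendre (Suc m))
      = Polynomial.smult (real m + 1) ([:0, 1:] * legendre (Suc m) - legendre m)" (is "?lC = ?rC")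
  proof -
    have "poly ?lB x = poly ?rB x" for x
      using conjunct1[OF legendre_pderiv_identities[of x m]] by simp
    moreover have "poly ?lC x = poly ?rC x" for x
      using conjunct2[OF legendre_pderiv_identities[of x m]]
      by (simp add: power2_eq_square algebra_simps)
    ultimately show "?lB = ?rB" "?lC = ?rC"
      by (simp_all add: poly_eq_poly_eq_iff[symmetric] fun_eq_iff)
  qed
  have "legendre_op (legendre n) = Polynomial.smult (real m + 1)
      (legendre (Suc m) + ([:0, 1:] * pderiv (legendre (Suc m)) - pderiv (legendre m)))"
    unfolding legendre_op_def Suc C by (simp add: pderiv_smult pderiv_diff pderiv_mult pderiv_pCons add_diff_eq)
  also have "\<dots> = Polynomial.smult (real n * (real n + 1)) (legendre n)"
    unfolding B Suc by (simp add: poly_eq_iff algebra_simps)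
  finally show ?thesis .
qed (simp add: legendre_op_def)

lemma degree_legendre_le: "degree (legendre n) \<le> n"
proof (induction n rule: legendre.induct)
  case (3 n)
  have "degree ([:0, 1:] * legendre (Suc n)) \<le> Suc (Suc n)"
    using degree_mult_le[of "[:0, 1:]" "legendre (Suc n)"] 3 by simp
  with 3 show ?case
    by (auto intro!: degree_diff_le)
qed simp_all

lemma coeff_legendre_pos: "coeff (legendre n) n > 0"
proof (induction n rule: legendre.induct)
  case (3 n)
  have "coeff (legendre n) (Suc (Suc n)) = 0"
    using degree_legendre_le[of n] by (simp add: coeff_eq_0)
  then have "coeff (legendre (Suc (Suc n))) (Suc (Suc n))
      = (2 * real n + 3) / (real n + 2) * coeff (legendre (Suc n)) (Suc n)"
    by (simp add: field_simps)
  with 3 show ?case by simp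
qed simp_all

lemma degree_legendre [simp]: "degree (legendre n) = n"
  using degree_legendre_le[of n] le_degree[of "legendre n" n] coeff_legendre_pos[of n] by simp

lemma poly_legendre_one: "poly (legendre n) 1 = 1"
  by (induction n rule: legendre.induct) (simp_all add: field_simps)


section \<open>Integration of real polynomials\<close>

definition poly_antideriv :: "real poly \<Rightarrow> real poly" where
  "poly_antideriv p = (\<Sum>i\<le>degree p. monom (coeff p i / real (Suc i)) (Suc i))"

lemma pderiv_poly_antideriv: "pderiv (poly_antideriv p) = p"
proof -
  have "pderiv (poly_antideriv p) = (\<Sum>i\<le>degree p. pderiv (monom (coeff p i / real (Suc i)) (Suc i)))"
    unfolding poly_antideriv_def using higher_pderiv_sum[of 1] by simp
  also have "\<dots> = (\<Sum>i\<le>degree p. monom (coeff p i) i)"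
    by (simp add: pderiv_monom)
  finally show ?thesis
    by (simp add: poly_as_sum_of_monoms)
qed

definition poly_integral :: "real \<Rightarrow> real \<Rightarrow> real poly \<Rightarrow> real" where
  "poly_integral a b p = poly (poly_antideriv p) b - poly (poly_antideriv p) a"

lemma poly_integral_eqI:
  assumes "pderiv F = p"
  shows "poly_integral a b p = poly F b - poly F a"
proof -
  have "degree (F - poly_antideriv p) = 0"
    using assms by (simp add: pderiv_eq_0_iff[symmetric] pderiv_diff pderiv_poly_antideriv)
  then obtain c where "F - poly_antideriv p = [:c:]"
    by (rule degree_eq_zeroE)
  then have "F = poly_antideriv p + [:c:]"
    by (simp add: diff_eq_eq)
  then show ?thesis
    unfolding poly_integral_def by simp
qed

lemma poly_integral_pderiv: "poly_integral a b (pderiv F) = poly F b - poly F a"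
  by (rule poly_integral_eqI) simp

lemma poly_integral_add: "poly_integral a b (p + q) = poly_integral a b p + poly_integral a b q"
  by (subst poly_integral_eqI[of "poly_antideriv p + poly_antideriv q"])
    (simp_all add: pderiv_add pderiv_poly_antideriv poly_integral_def)

lemma poly_integral_diff: "poly_integral a b (p - q) = poly_integral a b p - poly_integral a b q"
  by (subst poly_integral_eqI[of "poly_antideriv p - poly_antideriv q"])
    (simp_all add: pderiv_diff pderiv_poly_antideriv poly_integral_def)

lemma poly_integral_smult: "poly_integral a b (Polynomial.smult c p) = c * poly_integral a b p"
  by (subst poly_integral_eqI[of "Polynomial.smult c (poly_antideriv p)"])
    (simp_all add: pderiv_smult pderiv_poly_antideriv poly_integral_def algebra_simps)

lemma poly_integral_sum: "poly_integral a b (sum f A) = (\<Sum>x\<in>A. poly_integral a b (f x))"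
proof -
  have "poly_integral a b 0 = 0"
    using poly_integral_pderiv[of a b 0] by simp
  then show ?thesis
    by (induction A rule: infinite_finite_induct) (simp_all add: poly_integral_add)
qed

lemma poly_integral_pos:
  assumes "a < b" and "p \<noteq> 0" and nonneg: "\<And>x. a < x \<Longrightarrow> x < b \<Longrightarrow> poly p x \<ge> 0"
  shows "poly_integral a b p > 0"
proof -
  define F where "F = poly_antideriv p"
  have F': "DERIV (poly F) x :> poly p x" for x
    using poly_DERIV[of F] unfolding F_def pderiv_poly_antideriv .
  have mono: "poly F x \<le> poly F y" if "a \<le> x" "x \<le> y" "y \<le> b" for x y
  proof (rule DERIV_nonneg_imp_increasing_open[OF that(2)])
    fix t assume "x < t" "t < y"
    then have "poly p t \<ge> 0"
      using that by (intro nonneg) auto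
    with F' show "\<exists>y. DERIV (poly F) t :> y \<and> y \<ge> 0"
      by blast
  qed (simp add: continuous_intros)
  have "poly F a \<noteq> poly F b"
  proof
    assume "poly F a = poly F b"
    then have const: "poly F y = poly F a" if "a \<le> y" "y \<le> b" for y
      using mono[OF order_refl that] mono[OF that order_refl] by linarith
    have "poly p x = 0" if "a < x" "x < b" for x
    proof (rule DERIV_local_const[OF F'])
      show "0 < min (x - a) (b - x)" using that by simp
      show "\<forall>y. \<bar>x - y\<bar> < min (x - a) (b - x) \<longrightarrow> poly F x = poly F y"
      proof (intro allI impI)
        fix y assume "\<bar>x - y\<bar> < min (x - a) (b - x)"
        then have "a \<le> y" "y \<le> b" by (auto simp: abs_less_iff)
        then show "poly F x = poly F y" using const[of x] const[of y] that by simp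
      qed
    qed
    then have "{a<..<b} \<subseteq> {x. poly p x = 0}"
      by auto
    moreover have "infinite {a<..<b}"
      using \<open>a < b\<close> by simp
    ultimately show False
      using poly_roots_finite[OF \<open>p \<noteq> 0\<close>] by (metis finite_subset)
  qed
  with mono[of a b] \<open>a < b\<close> show ?thesis
    unfolding poly_integral_def F_def[symmetric] by simp
qed


section \<open>Orthogonality of the Legendre polynomials\<close>

lemma legendre_op_symmetric:
  "poly_integral (-1) 1 (legendre_op p * s) = poly_integral (-1) 1 (p * legendre_op s)"
proof -
  \<comment> \<open>Stated for an arbitrary weight \<open>W\<close>, so that simp does not multiply out \<open>[:-1, 0, 1:]\<close>.\<close>
  have lagrange_identity: "pderiv (W * pderiv p) * s - p * pderiv (W * pderiv s)
      = pderiv (W * (pderiv p * s - p * pderiv s))" for W :: "real poly"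
    by (simp add: pderiv_mult pderiv_diff algebra_simps)
  have "legendre_op p * s - p * legendre_op s
      = pderiv ([:-1, 0, 1:] * (pderiv p * s - p * pderiv s))"
    unfolding legendre_op_def by (rule lagrange_identity)
  then have "poly_integral (-1) 1 (legendre_op p * s) - poly_integral (-1) 1 (p * legendre_op s) = 0"
    by (simp add: poly_integral_diff[symmetric] poly_integral_pderiv)
  then show ?thesis by simp
qed

lemma legendre_op_monom:
  "legendre_op (monom 1 k) = Polynomial.smult (real k * (real k + 1)) (monom 1 k)
     - Polynomial.smult (real k * (real k - 1)) (monom 1 (k - 2))"
proof -
  have "pderiv (W * pderiv p) = W * pderiv (pderiv p) + pderiv W * pderiv p" for W p :: "real poly"
    by (simp add: pderiv_mult algebra_simps)
  moreover have "pderiv [:-1, 0, 1:] = [:0, 2::real:]"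
    by (simp add: pderiv_pCons)
  ultimately have expand: "legendre_op p = [:-1, 0, 1:] * pderiv (pderiv p) + [:0, 2:] * pderiv p" for p
    by (simp only: legendre_op_def)
  consider "k = 0" | "k = 1" | j where "k = Suc (Suc j)"
    by (metis One_nat_def not0_implies_Suc)
  then show ?thesis
    by cases (auto simp: expand pderiv_monom poly_monom algebra_simps power2_eq_square
        poly_eq_poly_eq_iff[symmetric])
qed

lemma legendre_orthogonal_monom:
  "k < n \<Longrightarrow> poly_integral (-1) 1 (legendre n * monom 1 k) = 0"
proof (induction k rule: less_induct)
  case (less k)
  define I where "I j = poly_integral (-1) 1 (legendre n * monom 1 j)" for j
  have "real n * (real n + 1) * I k = poly_integral (-1) 1 (legendre_op (legendre n) * monom 1 k)"
    unfolding legendre_ode I_def by (simp add: poly_integral_smult)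
  also have "\<dots> = poly_integral (-1) 1 (legendre n * legendre_op (monom 1 k))"
    by (rule legendre_op_symmetric)
  also have "\<dots> = real k * (real k + 1) * I k - real k * (real k - 1) * I (k - 2)"
    unfolding legendre_op_monom I_def by (simp add: algebra_simps poly_integral_diff poly_integral_smult)
  also have "real k * (real k - 1) * I (k - 2) = 0"
    using less by (cases "k \<ge> 2") (auto simp: I_def)
  finally have "(real n * (real n + 1) - real k * (real k + 1)) * I k = 0"
    by (simp add: left_diff_distrib)
  moreover have "real k * (real k + 1) < real n * (real n + 1)"
    using less.prems by (intro mult_strict_mono) auto
  ultimately show ?case
    unfolding I_def by simp
qed

lemma legendre_orthogonal:
  assumes "degree s < n"
  shows "poly_integral (-1) 1 (legendre n * s) = 0"
proof -
  have "monom c i = Polynomial.smult c (monom 1 i)" for c :: real and i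
    by (simp add: smult_monom)
  then have "legendre n * s = (\<Sum>i\<le>degree s. Polynomial.smult (coeff s i) (legendre n * monom 1 i))"
    by (metis (no_types, lifting) poly_as_sum_of_monoms sum.cong sum_distrib_left mult_smult_right)
  then have "poly_integral (-1) 1 (legendre n * s)
      = (\<Sum>i\<le>degree s. coeff s i * poly_integral (-1) 1 (legendre n * monom 1 i))"
    by (simp add: poly_integral_sum poly_integral_smult)
  also have "\<dots> = 0"
    using assms by (intro sum.neutral) (auto simp: legendre_orthogonal_monom)
  finally show ?thesis .
qed

lemma legendre_pderiv_orthogonal:
  assumes "degree s + 1 < n"
  shows "poly_integral (-1) 1 ([:1, 0, -1:] * (pderiv (legendre n) * s)) = 0"
proof -
  have "W * (pderiv p * s) = pderiv (W * s * p) - p * pderiv (W * s)" for W p :: "real poly"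
    by (simp add: pderiv_mult algebra_simps)
  then have eq: "[:1, 0, -1:] * (pderiv (legendre n) * s)
      = pderiv ([:1, 0, -1:] * s * legendre n) - legendre n * pderiv ([:1, 0, -1:] * s)" .
  have "degree ([:1, 0, -1:] * s) \<le> 2 + degree s"
    using degree_mult_le[of "[:1, 0, -1:]" s] by simp
  then have "degree (pderiv ([:1, 0, -1:] * s)) < n"
    using assms by (simp add: degree_pderiv)
  then show ?thesis
    unfolding eq poly_integral_diff by (simp add: legendre_orthogonal poly_integral_pderiv)
qed


section \<open>The interior LGL nodes\<close>

lemma odd_order_root_between:
  fixes g :: "real poly"
  assumes "a < b" "poly g a * poly g b < 0"
  shows "\<exists>r. a < r \<and> r < b \<and> odd (order r g)"
  using assms
proof (induction "degree g" arbitrary: g rule: less_induct)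
  case less
  have g0: "g \<noteq> 0" using less.prems by auto
  obtain r where r: "a < r" "r < b" "poly g r = 0"
    using poly_IVT[OF less.prems] by auto
  define m where "m = order r g"
  show ?case
  proof (cases "odd m")
    case True
    then show ?thesis using r m_def by auto
  next
    case False
    obtain h where h: "g = [:-r, 1:] ^ m * h" and "\<not> [:-r, 1:] dvd h"
      using order_decomp[OF g0] m_def by auto
    then have hr: "poly h r \<noteq> 0" using poly_eq_0_iff_dvd by blast
    have m0: "m \<noteq> 0" using r(3) g0 order_root[of g r] m_def by simp
    have "(a - r) ^ m * (b - r) ^ m > 0"
      using False r by (simp add: zero_less_power_eq)
    moreover have "poly g a * poly g b = ((a - r) ^ m * (b - r) ^ m) * (poly h a * poly h b)"
      unfolding h by (simp add: poly_power algebra_simps)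
    ultimately have hab: "poly h a * poly h b < 0"
      using less.prems(2) by (metis mult_less_cancel_left_pos mult_zero_right)
    have "degree g = m + degree h"
      unfolding h using hr by (subst degree_mult_eq) (auto simp: degree_linear_power)
    with m0 have "degree h < degree g" by simp
    from less.hyps[OF this less.prems(1) hab] obtain r' where
      r': "a < r'" "r' < b" "odd (order r' h)" by auto
    have "r' \<noteq> r" using r'(3) hr order_root[of h r] by auto
    then have "order r' ([:-r, 1:] ^ m) = 0"
      using order_root[of "[:-r, 1:] ^ m" r'] by (simp add: poly_power)
    then have "order r' g = order r' h"
      unfolding h using g0 h by (simp add: order_mult)
    with r' show ?thesis by auto
  qed
qed

lemma poly_mult_nonneg_if_even_orders:
  fixes g :: "real poly"
  assumes even: "\<And>r. a < r \<Longrightarrow> r < b \<Longrightarrow> even (order r g)"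
    and "a < x" "x < b" "a < y" "y < b"
  shows "poly g x * poly g y \<ge> 0"
proof -
  have *: "poly g u * poly g v \<ge> 0" if "a < u" "u \<le> v" "v < b" for u v
  proof (rule ccontr)
    assume neg: "\<not> ?thesis"
    then have "u < v" using \<open>u \<le> v\<close> by (cases "u = v") auto
    from odd_order_root_between[of u v g] \<open>u < v\<close> neg
    obtain r where "u < r" "r < v" "odd (order r g)"
      by (auto simp: not_le)
    with even[of r] that show False by auto
  qed
  show ?thesis
    using *[of x y] *[of y x] assms by (cases "x \<le> y") (auto simp: mult.commute)
qed

lemma poly_integral_mult_nonzero_if_even_orders:
  fixes w g :: "real poly"
  assumes "a < b" "g \<noteq> 0"
    and even: "\<And>r. a < r \<Longrightarrow> r < b \<Longrightarrow> even (order r g)"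
    and pos: "\<And>x. a < x \<Longrightarrow> x < b \<Longrightarrow> poly w x > 0"
  shows "poly_integral a b (w * g) \<noteq> 0"
proof -
  have "infinite {a<..<b}"
    using \<open>a < b\<close> by simp
  then have "\<not> {a<..<b} \<subseteq> {x. poly g x = 0}"
    using poly_roots_finite[OF \<open>g \<noteq> 0\<close>] by (metis finite_subset)
  then obtain y where "y \<in> {a<..<b}" "y \<notin> {x. poly g x = 0}"
    by blast
  then have y: "a < y" "y < b" "poly g y \<noteq> 0"
    by simp_all
  have "w \<noteq> 0"
    using pos[OF y(1,2)] by auto
  have "poly_integral a b (Polynomial.smult (poly g y) (w * g)) > 0"
  proof (rule poly_integral_pos[OF \<open>a < b\<close>])
    show "Polynomial.smult (poly g y) (w * g) \<noteq> 0"
      using y(3) \<open>w \<noteq> 0\<close> \<open>g \<noteq> 0\<close> by simp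
    fix x assume x: "a < x" "x < b"
    have "0 \<le> poly w x * (poly g x * poly g y)"
      using less_imp_le[OF pos[OF x]] poly_mult_nonneg_if_even_orders[OF even x y(1,2)]
      by (rule mult_nonneg_nonneg)
    then show "0 \<le> poly (Polynomial.smult (poly g y) (w * g)) x"
      by (simp add: mult_ac)
  qed
  then have "poly g y * poly_integral a b (w * g) > 0"
    by (simp add: poly_integral_smult)
  then show ?thesis
    by auto
qed

lemma order_prod_linear_factors:
  fixes R :: "'a::idom set"
  assumes "finite R"
  shows "order x (\<Prod>t\<in>R. [:-t, 1:]) = (if x \<in> R then 1 else 0)"
  using assms
proof (induction R rule: finite_induct)
  case empty
  then show ?case using order_root[of "1::'a poly" x] by simp
next
  case (insert t R)
  have "order x [:-t, 1:] = (if x = t then 1 else 0)"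
    using order_power_n_n[of t 1] order_root[of "[:-t, 1:]" x] by auto
  moreover have "(\<Prod>t\<in>R. [:-t, 1:]) \<noteq> (0::'a poly)"
    using insert.hyps by (simp add: prod_zero_iff)
  then have "order x (\<Prod>t\<in>insert t R. [:-t, 1:]) = order x [:-t, 1:] + order x (\<Prod>t\<in>R. [:-t, 1:])"
    unfolding prod.insert[OF insert.hyps] by (intro order_mult no_zero_divisors) auto
  ultimately show ?case
    using insert by auto
qed

lemma card_roots_pderiv_legendre:
  assumes "N \<ge> 1"
  shows "card {x. -1 < x \<and> x < 1 \<and> poly (pderiv (legendre N)) x = 0} = N - 1"
proof -
  define p where "p = pderiv (legendre N)"
  have p0: "p \<noteq> 0" and deg_p: "degree p = N - 1"
    using assms by (simp_all add: p_def pderiv_eq_0_iff degree_pderiv)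
  define Z where "Z = {x. -1 < x \<and> x < 1 \<and> poly p x = 0}"
  have finZ: "finite Z"
    using poly_roots_finite[OF p0] unfolding Z_def by (rule rev_finite_subset) auto
  have "card Z \<le> N - 1"
    using card_mono[OF poly_roots_finite[OF p0], of Z] card_poly_roots_bound[OF p0] deg_p
    unfolding Z_def by fastforce
  define R where "R = {r. -1 < r \<and> r < 1 \<and> odd (order r p)}"
  have RZ: "R \<subseteq> Z"
    unfolding R_def Z_def using order_root[of p] by (fastforce elim: oddE)
  have finR: "finite R" using finite_subset[OF RZ finZ] .
  have "card R \<ge> N - 1"
  proof (rule ccontr)
    assume "\<not> ?thesis"
    define s where "s = (\<Prod>t\<in>R. [:-t, 1::real:])"
    have "degree s = card R"
      unfolding s_def by (subst degree_prod_eq_sum_degree) auto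
    with \<open>\<not> card R \<ge> N - 1\<close> have "poly_integral (-1) 1 ([:1, 0, -1:] * (p * s)) = 0"
      unfolding p_def by (intro legendre_pderiv_orthogonal) simp
    moreover have "poly_integral (-1) 1 ([:1, 0, -1:] * (p * s)) \<noteq> 0"
    proof (rule poly_integral_mult_nonzero_if_even_orders)
      have "s \<noteq> 0" unfolding s_def by (simp add: prod_zero_iff finR)
      with p0 show "p * s \<noteq> 0" by simp
      fix r :: real assume "-1 < r" "r < 1"
      have "order r (p * s) = order r p + order r s"
        using \<open>p * s \<noteq> 0\<close> by (rule order_mult)
      also have "order r s = (if r \<in> R then 1 else 0)"
        unfolding s_def by (rule order_prod_linear_factors[OF finR])
      finally show "even (order r (p * s))"
        using \<open>-1 < r\<close> \<open>r < 1\<close> unfolding R_def by auto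
    next
      fix x :: real assume "-1 < x" "x < 1"
      then show "poly [:1, 0, -1:] x > 0"
        using abs_square_less_1[of x] by (simp add: power2_eq_square)
    qed simp
    ultimately show False by simp
  qed
  with \<open>card Z \<le> N - 1\<close> card_mono[OF finZ RZ] show ?thesis
    unfolding Z_def p_def by simp
qed


section \<open>Divided differences\<close>

lemma poly_eq_smult_prod_roots:
  fixes p :: "'a::idom poly"
  assumes "finite T" "card T = degree p" "\<And>t. t \<in> T \<Longrightarrow> poly p t = 0"
  shows "p = Polynomial.smult (lead_coeff p) (\<Prod>t\<in>T. [:-t, 1:])"
proof -
  have deg: "degree (\<Prod>t\<in>T. [:-t, 1::'a:]) = degree p"
    using assms(1,2) by (subst degree_prod_eq_sum_degree) auto
  show ?thesis
  proof (rule poly_eqI_degree_lead_coeff[where n = "degree p" and A = T])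
    show "coeff p (degree p) = coeff (Polynomial.smult (lead_coeff p) (\<Prod>t\<in>T. [:-t, 1:])) (degree p)"
      using deg lead_coeff_prod[of "\<lambda>t. [:-t, 1::'a:]" T] by simp
    show "degree (Polynomial.smult (lead_coeff p) (\<Prod>t\<in>T. [:-t, 1:])) \<le> degree p"
      using degree_smult_le[of "lead_coeff p" "\<Prod>t\<in>T. [:-t, 1::'a:]"] deg by simp
    fix z assume "z \<in> T"
    have "poly (\<Prod>t\<in>T. [:-t, 1:]) z = (\<Prod>t\<in>T. z - t)"
      by (simp add: poly_prod)
    also have "\<dots> = 0"
      using \<open>finite T\<close> by (rule prod_zero) (use \<open>z \<in> T\<close> in \<open>intro bexI[of _ z]; simp\<close>)
    finally show "poly p z = poly (Polynomial.smult (lead_coeff p) (\<Prod>t\<in>T. [:-t, 1:])) z"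
      using assms(3)[OF \<open>z \<in> T\<close>] by simp
  qed (use assms(2) in simp_all)
qed

lemma poly_pderiv_prod_linear_factors:
  fixes T :: "'a::idom set"
  assumes "finite T" "x \<in> T"
  shows "poly (pderiv (\<Prod>t\<in>T. [:-t, 1:])) x = (\<Prod>t\<in>T - {x}. x - t)"
proof -
  have "poly (pderiv (\<Prod>t\<in>T. [:-t, 1:])) x = (\<Sum>a\<in>T. \<Prod>t\<in>T - {a}. x - t)"
    by (simp add: pderiv_prod poly_sum poly_prod pderiv_pCons)
  also have "\<dots> = (\<Prod>t\<in>T - {x}. x - t)"
    using assms by (subst sum.mono_neutral_right[of T "{x}"]) (auto simp: prod_zero_iff)
  finally show ?thesis .
qed

text \<open>The sum is the divided difference of \<open>g\<close> over the nodes \<open>T\<close>, i.e. the coefficient of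
  degree \<open>card T - 1\<close> of the Lagrange interpolant of \<open>g\<close>.\<close>

lemma divided_difference_eq_0:
  fixes g :: "real poly"
  assumes "finite T" and deg: "degree g + 2 \<le> card T"
  shows "(\<Sum>x\<in>T. poly g x / (\<Prod>y\<in>T - {x}. x - y)) = 0"
proof -
  define \<omega> where "\<omega> x = (\<Prod>y\<in>T - {x}. [:-y, 1::real:])" for x
  define L where "L = (\<Sum>x\<in>T. Polynomial.smult (poly g x / (\<Prod>y\<in>T - {x}. x - y)) (\<omega> x))"
  have deg_\<omega>: "degree (\<omega> x) = card T - 1" if "x \<in> T" for x
    using that \<open>finite T\<close> unfolding \<omega>_def by (subst degree_prod_eq_sum_degree) auto
  have lc_\<omega>: "coeff (\<omega> x) (card T - 1) = 1" if "x \<in> T" for x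
    using deg_\<omega>[OF that] lead_coeff_prod[of "\<lambda>y. [:-y, 1::real:]" "T - {x}"]
    unfolding \<omega>_def by simp
  have "L = g"
  proof (rule poly_eqI_degree[of T])
    fix z assume "z \<in> T"
    have "poly L z = (\<Sum>x\<in>T. poly g x / (\<Prod>y\<in>T - {x}. x - y) * (\<Prod>y\<in>T - {x}. z - y))"
      unfolding L_def \<omega>_def by (simp add: poly_sum poly_prod)
    also have "\<dots> = poly g z"
      using \<open>finite T\<close> \<open>z \<in> T\<close> by (subst sum.mono_neutral_right[of T "{z}"]) (auto simp: prod_zero_iff)
    finally show "poly L z = poly g z" .
  next
    have "degree L \<le> card T - 1"
      unfolding L_def using deg_\<omega> by (intro degree_sum_le[OF \<open>finite T\<close>] order.trans[OF degree_smult_le]) auto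
    then show "degree L < card T" using deg by linarith
  qed (use deg in simp)
  have "(\<Sum>x\<in>T. poly g x / (\<Prod>y\<in>T - {x}. x - y)) = coeff L (card T - 1)"
    unfolding L_def coeff_sum coeff_smult using lc_\<omega> by (intro sum.cong) simp_all
  also have "\<dots> = coeff g (card T - 1)"
    using \<open>L = g\<close> by simp
  also have "\<dots> = 0"
    using deg by (intro coeff_eq_0) simp
  finally show ?thesis .
qed


section \<open>Discrete orthogonality at the LGL nodes\<close>

definition lgl_node_set :: "nat \<Rightarrow> real set" where
  "lgl_node_set N = {-1, 1} \<union> {x. -1 < x \<and> x < 1 \<and> poly (pderiv (legendre N)) x = 0}"

lemma finite_lgl_node_set:
  assumes "N \<ge> 1"
  shows "finite (lgl_node_set N)"
proof -
  have "pderiv (legendre N) \<noteq> 0"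
    using assms by (simp add: pderiv_eq_0_iff)
  from poly_roots_finite[OF this] show ?thesis
    unfolding lgl_node_set_def by (auto elim: rev_finite_subset)
qed

lemma card_lgl_node_set:
  assumes "N \<ge> 1"
  shows "card (lgl_node_set N) = N + 1"
proof -
  define Z where "Z = {x. -1 < x \<and> x < 1 \<and> poly (pderiv (legendre N)) x = 0}"
  have "lgl_node_set N = insert (-1) (insert 1 Z)" "-1 \<notin> insert 1 Z" "1 \<notin> Z"
    unfolding lgl_node_set_def Z_def by auto
  moreover have "finite Z"
    using finite_lgl_node_set[OF assms] unfolding lgl_node_set_def Z_def by simp
  ultimately show ?thesis
    using card_roots_pderiv_legendre[OF assms] assms unfolding Z_def by simp
qed

lemma sum_lgl_nodes:
  assumes "N \<ge> 1"
  shows "(\<Sum>i\<in>{0..<N + 1}. f (lgl_node N i)) = (\<Sum>x\<in>lgl_node_set N. f x)"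
proof -
  define xs where "xs = lgl_nodes N"
  have "distinct xs" "set xs = lgl_node_set N" "length xs = N + 1"
    unfolding xs_def lgl_nodes_def lgl_node_set_def[symmetric]
    using finite_lgl_node_set[OF assms] card_lgl_node_set[OF assms] by auto
  then have "(\<Sum>x\<in>lgl_node_set N. f x) = sum_list (map f xs)"
    by (metis sum.distinct_set_conv_list)
  also have "\<dots> = (\<Sum>i\<in>{0..<N + 1}. f (xs ! i))"
    using \<open>length xs = N + 1\<close> by (simp add: sum_list_sum_nth)
  finally show ?thesis
    unfolding lgl_node_def xs_def by simp
qed

lemma legendre_at_lgl_nodes:
  assumes "N \<ge> 1"
  obtains c where "c \<noteq> 0"
    and "\<And>x. x \<in> lgl_node_set N \<Longrightarrow> poly (legendre N) x = c * (\<Prod>y\<in>lgl_node_set N - {x}. x - y)"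
proof
  define q where "q = [:1, 0, -1:] * pderiv (legendre N)"
  define c where "c = real N * (real N + 1)"
  have "c > 0"
    unfolding c_def using assms by (intro mult_pos_pos) auto
  have "pderiv (legendre N) \<noteq> 0"
    using assms by (simp add: pderiv_eq_0_iff)
  then have "q \<noteq> 0"
    unfolding q_def by (intro no_zero_divisors) auto
  have "degree q = degree [:1, 0, -1::real:] + degree (pderiv (legendre N))"
    unfolding q_def using \<open>pderiv (legendre N) \<noteq> 0\<close> by (intro degree_mult_eq) auto
  then have "card (lgl_node_set N) = degree q"
    using assms by (simp add: degree_pderiv card_lgl_node_set)
  moreover have "poly q t = 0" if "t \<in> lgl_node_set N" for t
    using that unfolding q_def lgl_node_set_def by auto
  ultimately have q_eq: "q = Polynomial.smult (lead_coeff q) (\<Prod>t\<in>lgl_node_set N. [:-t, 1:])"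
    by (intro poly_eq_smult_prod_roots finite_lgl_node_set assms)
  have "[:1, 0, -1:] = - [:-1, 0, 1::real:]"
    by simp
  then have "pderiv q = - legendre_op (legendre N)"
    unfolding q_def legendre_op_def by (simp only: mult_minus_left pderiv_minus)
  then have q': "pderiv q = Polynomial.smult (- c) (legendre N)"
    by (simp add: legendre_ode c_def)
  show "- lead_coeff q / c \<noteq> 0"
    using \<open>q \<noteq> 0\<close> \<open>c > 0\<close> by simp
  fix x assume x: "x \<in> lgl_node_set N"
  have "- c * poly (legendre N) x = poly (pderiv q) x"
    using q' by simp
  also have "\<dots> = lead_coeff q * (\<Prod>y\<in>lgl_node_set N - {x}. x - y)"
    by (subst q_eq) (simp add: pderiv_smult poly_pderiv_prod_linear_factors[OF finite_lgl_node_set[OF assms] x])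
  finally have eq: "- c * poly (legendre N) x = lead_coeff q * (\<Prod>y\<in>lgl_node_set N - {x}. x - y)" .
  have "poly (legendre N) x = (- c * poly (legendre N) x) / (- c)"
    using \<open>c > 0\<close> by simp
  also have "\<dots> = - lead_coeff q / c * (\<Prod>y\<in>lgl_node_set N - {x}. x - y)"
    unfolding eq by simp
  finally show "poly (legendre N) x = - lead_coeff q / c * (\<Prod>y\<in>lgl_node_set N - {x}. x - y)" .
qed

lemma sum_lgl_nodes_div_legendre:
  assumes "N \<ge> 1" "degree g < N"
  shows "(\<Sum>x\<in>lgl_node_set N. poly g x / poly (legendre N) x) = 0"
proof -
  obtain c where "c \<noteq> 0"
    and P: "\<And>x. x \<in> lgl_node_set N \<Longrightarrow> poly (legendre N) x = c * (\<Prod>y\<in>lgl_node_set N - {x}. x - y)"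
    using legendre_at_lgl_nodes[OF assms(1)] by blast
  have "(\<Sum>x\<in>lgl_node_set N. poly g x / poly (legendre N) x)
      = (\<Sum>x\<in>lgl_node_set N. poly g x / (\<Prod>y\<in>lgl_node_set N - {x}. x - y)) / c"
    by (simp add: P sum_divide_distrib ac_simps)
  also have "\<dots> = 0"
    using assms by (simp add: divided_difference_eq_0 finite_lgl_node_set card_lgl_node_set)
  finally show ?thesis .
qed

lemma legendre_pred_at_lgl_node:
  assumes "N \<ge> 1" "x \<in> lgl_node_set N"
  shows "poly (legendre (N - 1)) x = x * poly (legendre N) x"
proof -
  obtain n where n: "N = Suc n" using assms(1) by (cases N) auto
  have "(x\<^sup>2 - 1) * poly (pderiv (legendre N)) x = 0"
    using assms(2) unfolding lgl_node_set_def by auto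
  with legendre_pderiv_identities[of x n] show ?thesis
    unfolding n by simp
qed

text \<open>Bonnet's recurrence solved for P_(N-m-2) in terms of P_(N-m-1) and P_(N-m), started from
  P_(N-1) = x P_N at the nodes.\<close>

fun lgl_factor :: "nat \<Rightarrow> nat \<Rightarrow> real poly" where
  "lgl_factor N 0 = 1"
| "lgl_factor N (Suc 0) = [:0, 1:]"
| "lgl_factor N (Suc (Suc m)) = Polynomial.smult (1 / (real N - real m - 1))
     (Polynomial.smult (2 * (real N - real m - 1) + 1) ([:0, 1:] * lgl_factor N (Suc m))
      - Polynomial.smult (real N - real m) (lgl_factor N m))"

lemma degree_lgl_factor: "degree (lgl_factor N m) \<le> m"
proof (induction N m rule: lgl_factor.induct)
  case (3 N m)
  have "degree ([:0, 1:] * lgl_factor N (Suc m)) \<le> Suc (Suc m)"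
    using degree_mult_le[of "[:0, 1:]" "lgl_factor N (Suc m)"] 3 by simp
  moreover have "degree (lgl_factor N m) \<le> Suc (Suc m)"
    using 3 by simp
  ultimately have "degree (Polynomial.smult (2 * (real N - real m - 1) + 1) ([:0, 1:] * lgl_factor N (Suc m))
      - Polynomial.smult (real N - real m) (lgl_factor N m)) \<le> Suc (Suc m)"
    by (intro degree_diff_le order.trans[OF degree_smult_le])
  then show ?case
    by (simp only: lgl_factor.simps order.trans[OF degree_smult_le])
qed simp_all

lemma legendre_at_lgl_node_eq_lgl_factor:
  "N \<ge> 1 \<Longrightarrow> x \<in> lgl_node_set N \<Longrightarrow> m \<le> N \<Longrightarrow>
     poly (legendre (N - m)) x = poly (lgl_factor N m) x * poly (legendre N) x"
proof (induction N m rule: lgl_factor.induct)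
  case (2 N)
  then show ?case using legendre_pred_at_lgl_node by simp
next
  case (3 N m)
  obtain k where k: "N = k + Suc (Suc m)"
    using 3(5) by (metis add.commute le_Suc_ex)
  have idx: "N - Suc m = Suc k" "N - m = Suc (Suc k)" "N - Suc (Suc m) = k"
    using k by auto
  have IH1: "poly (legendre (Suc k)) x = poly (lgl_factor N (Suc m)) x * poly (legendre N) x"
    using 3(1)[OF 3(3,4)] 3(5) idx by simp
  have IH2: "poly (legendre (Suc (Suc k))) x = poly (lgl_factor N m) x * poly (legendre N) x"
    using 3(2)[OF 3(3,4)] 3(5) idx by simp
  have rN: "real N - real m - 1 = real k + 1" "real N - real m = real k + 2"
    using k by auto
  have "poly (lgl_factor N (Suc (Suc m))) x * poly (legendre N) x
      = 1 / (real k + 1) * ((2 * real k + 3) * x * (poly (lgl_factor N (Suc m)) x * poly (legendre N) x)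
         - (real k + 2) * (poly (lgl_factor N m) x * poly (legendre N) x))"
    by (simp only: lgl_factor.simps rN poly_smult poly_diff poly_mult) (simp add: algebra_simps)
  also have "\<dots> = 1 / (real k + 1) * ((2 * real k + 3) * x * poly (legendre (Suc k)) x
      - (real k + 2) * poly (legendre (Suc (Suc k))) x)"
    unfolding IH1 IH2 ..
  also have "(2 * real k + 3) * x * poly (legendre (Suc k)) x - (real k + 2) * poly (legendre (Suc (Suc k))) x
      = (real k + 1) * poly (legendre k) x"
    using legendre_recurrence[of k x] by linarith
  finally show ?case
    using idx by simp
qed simp

lemma lgl_discrete_orthogonality:
  assumes "N \<ge> 1" "j < k" "k \<le> N"
  shows "(\<Sum>x\<in>lgl_node_set N.
           poly (legendre j) x * poly (legendre k) x / (poly (legendre N) x)\<^sup>2) = 0"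
proof -
  define B where "B = lgl_factor N (N - k)"
  have "(\<Sum>x\<in>lgl_node_set N. poly (legendre j) x * poly (legendre k) x / (poly (legendre N) x)\<^sup>2)
      = (\<Sum>x\<in>lgl_node_set N. poly (legendre j * B) x / poly (legendre N) x)"
  proof (rule sum.cong[OF refl])
    fix x assume "x \<in> lgl_node_set N"
    then have "poly (legendre k) x = poly B x * poly (legendre N) x"
      using legendre_at_lgl_node_eq_lgl_factor[OF assms(1), of x "N - k"] assms unfolding B_def by simp
    then show "poly (legendre j) x * poly (legendre k) x / (poly (legendre N) x)\<^sup>2
        = poly (legendre j * B) x / poly (legendre N) x"
      by (cases "poly (legendre N) x = 0") (simp_all add: power2_eq_square)
  qed
  also have "\<dots> = 0"
  proof (rule sum_lgl_nodes_div_legendre[OF assms(1)])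
    show "degree (legendre j * B) < N"
      using degree_mult_le[of "legendre j" B] degree_lgl_factor[of N "N - k"] assms
      unfolding B_def by simp
  qed
  finally show ?thesis .
qed


section \<open>The filter matrix\<close>

definition lgl_gram :: "nat \<Rightarrow> nat \<Rightarrow> nat \<Rightarrow> real" where
  "lgl_gram N j k = (\<Sum>i\<in>{0..<N + 1}.
     lgl_weight N i * norm_legendre j (lgl_node N i) * norm_legendre k (lgl_node N i))"

lemma lgl_gram_eq_sum_lgl_node_set:
  assumes "N \<ge> 1"
  shows "lgl_gram N j k = (\<Sum>x\<in>lgl_node_set N.
    2 / (real N * (real N + 1) * (poly (legendre N) x)\<^sup>2) * norm_legendre j x * norm_legendre k x)"
  unfolding lgl_gram_def lgl_weight_def by (rule sum_lgl_nodes[OF assms])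

lemma lgl_gram_eq_0:
  assumes "N \<ge> 1" "j \<le> N" "k \<le> N" "j \<noteq> k"
  shows "lgl_gram N j k = 0"
proof -
  have lt: "lgl_gram N j k = 0" if "j < k" "k \<le> N" for j k
  proof -
    define c where "c = 2 * sqrt ((2 * real j + 1) / 2) * sqrt ((2 * real k + 1) / 2) / (real N * (real N + 1))"
    have "lgl_gram N j k = (\<Sum>x\<in>lgl_node_set N.
        c * (poly (legendre j) x * poly (legendre k) x / (poly (legendre N) x)\<^sup>2))"
      unfolding lgl_gram_eq_sum_lgl_node_set[OF assms(1)]
      by (rule sum.cong[OF refl]) (simp add: norm_legendre_def c_def)
    also have "\<dots> = c * (\<Sum>x\<in>lgl_node_set N.
        poly (legendre j) x * poly (legendre k) x / (poly (legendre N) x)\<^sup>2)"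
      by (rule sum_distrib_left[symmetric])
    also have "\<dots> = 0"
      using lgl_discrete_orthogonality[OF assms(1) that] by simp
    finally show ?thesis .
  qed
  show ?thesis
  proof (cases "j < k")
    case False
    then show ?thesis
      using lt[of k j] assms by (simp add: lgl_gram_def mult_ac)
  qed (use lt assms in simp)
qed

lemma lgl_gram_diag_pos:
  assumes "N \<ge> 1"
  shows "lgl_gram N j j > 0"
  unfolding lgl_gram_eq_sum_lgl_node_set[OF assms]
proof (rule sum_pos2[OF finite_lgl_node_set[OF assms]])
  show "1 \<in> lgl_node_set N"
    unfolding lgl_node_set_def by simp
  show "0 < 2 / (real N * (real N + 1) * (poly (legendre N) 1)\<^sup>2) * norm_legendre j 1 * norm_legendre j 1"
    using assms by (simp add: norm_legendre_def poly_legendre_one mult.assoc)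
qed (simp add: mult.assoc)

lemma diagonal_mat_mult_vec_index:
  assumes "i < n" "v \<in> carrier_vec n"
  shows "(mat n n (\<lambda>(i, j). if i = j then d i else 0) *\<^sub>v v) $ i = d i * v $ i"
proof -
  have "(mat n n (\<lambda>(i, j). if i = j then d i else 0) *\<^sub>v v) $ i
      = (\<Sum>j\<in>{0..<n}. (if i = j then d i else 0) * v $ j)"
    using assms by (simp add: scalar_prod_def)
  also have "\<dots> = (\<Sum>j\<in>{0..<n}. if i = j then d i * v $ j else 0)"
    by (rule sum.cong) simp_all
  also have "\<dots> = d i * v $ i"
    using assms(1) by simp
  finally show ?thesis .
qed

lemma quadratic_form_sum_expand:
  fixes a :: "'i \<Rightarrow> 'j \<Rightarrow> 'a::comm_semiring_1"
  shows "(\<Sum>i\<in>I. w i * ((\<Sum>j\<in>J. a i j * z j) * (\<Sum>k\<in>J. a i k * z k)))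
       = (\<Sum>j\<in>J. \<Sum>k\<in>J. z j * z k * (\<Sum>i\<in>I. w i * a i j * a i k))"
proof -
  have "(\<Sum>i\<in>I. w i * ((\<Sum>j\<in>J. a i j * z j) * (\<Sum>k\<in>J. a i k * z k)))
      = (\<Sum>i\<in>I. \<Sum>j\<in>J. \<Sum>k\<in>J. z j * z k * (w i * a i j * a i k))"
    by (simp add: sum_product sum_distrib_left mult_ac)
  also have "\<dots> = (\<Sum>j\<in>J. \<Sum>k\<in>J. \<Sum>i\<in>I. z j * z k * (w i * a i j * a i k))"
    by (subst sum.swap) (rule sum.cong[OF refl], rule sum.swap)
  also have "\<dots> = (\<Sum>j\<in>J. \<Sum>k\<in>J. z j * z k * (\<Sum>i\<in>I. w i * a i j * a i k))"
    by (simp add: sum_distrib_left mult_ac)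
  finally show ?thesis .
qed

lemma lgl_mass_quadratic_form:
  assumes "N \<ge> 1" "z \<in> carrier_vec (N + 1)"
  shows "(lgl_vandermonde N *\<^sub>v z) \<bullet> (lgl_mass N *\<^sub>v (lgl_vandermonde N *\<^sub>v z))
    = (\<Sum>j\<in>{0..<N + 1}. lgl_gram N j j * (z $ j)\<^sup>2)"
proof -
  define y where "y = lgl_vandermonde N *\<^sub>v z"
  have y: "y \<in> carrier_vec (N + 1)"
    unfolding y_def by (rule mult_mat_vec_carrier[OF _ assms(2)]) (simp add: lgl_vandermonde_def)
  have y_index: "y $ i = (\<Sum>j\<in>{0..<N + 1}. norm_legendre j (lgl_node N i) * z $ j)" if "i < N + 1" for i
    using that assms(2) unfolding y_def lgl_vandermonde_def by (simp add: scalar_prod_def)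
  have M: "lgl_mass N \<in> carrier_mat (N + 1) (N + 1)"
    unfolding lgl_mass_def by simp
  have My: "(lgl_mass N *\<^sub>v y) $ i = lgl_weight N i * y $ i" if "i < N + 1" for i
    unfolding lgl_mass_def using that y by (rule diagonal_mat_mult_vec_index)
  have "y \<bullet> (lgl_mass N *\<^sub>v y) = (\<Sum>i\<in>{0..<N + 1}. y $ i * (lgl_mass N *\<^sub>v y) $ i)"
    unfolding scalar_prod_def using M by simp
  also have "\<dots> = (\<Sum>i\<in>{0..<N + 1}. y $ i * (lgl_weight N i * y $ i))"
    using My by (intro sum.cong) simp_all
  also have "\<dots> = (\<Sum>i\<in>{0..<N + 1}. lgl_weight N i
      * ((\<Sum>j\<in>{0..<N + 1}. norm_legendre j (lgl_node N i) * z $ j)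
       * (\<Sum>k\<in>{0..<N + 1}. norm_legendre k (lgl_node N i) * z $ k)))"
    by (rule sum.cong) (simp_all add: y_index mult_ac)
  also have "\<dots> = (\<Sum>j\<in>{0..<N + 1}. \<Sum>k\<in>{0..<N + 1}. z $ j * z $ k * lgl_gram N j k)"
    unfolding quadratic_form_sum_expand lgl_gram_def ..
  also have "\<dots> = (\<Sum>j\<in>{0..<N + 1}. \<Sum>k\<in>{0..<N + 1}. if j = k then lgl_gram N j j * (z $ j)\<^sup>2 else 0)"
    using lgl_gram_eq_0[OF assms(1)]
    by (intro sum.cong refl) (auto simp: power2_eq_square)
  also have "\<dots> = (\<Sum>j\<in>{0..<N + 1}. lgl_gram N j j * (z $ j)\<^sup>2)"
    by simp
  finally show ?thesis
    unfolding y_def .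
qed

lemma lgl_vandermonde_invertible:
  assumes "N \<ge> 1"
  obtains W where "mat_inverse (lgl_vandermonde N) = Some W"
proof -
  have V: "lgl_vandermonde N \<in> carrier_mat (N + 1) (N + 1)"
    unfolding lgl_vandermonde_def by simp
  have M: "lgl_mass N \<in> carrier_mat (N + 1) (N + 1)"
    unfolding lgl_mass_def by simp
  have "det (lgl_vandermonde N) \<noteq> 0"
  proof
    assume "det (lgl_vandermonde N) = 0"
    then obtain v where v: "v \<in> carrier_vec (N + 1)" "v \<noteq> 0\<^sub>v (N + 1)"
      and Vv: "lgl_vandermonde N *\<^sub>v v = 0\<^sub>v (N + 1)"
      using det_0_iff_vec_prod_zero_field[OF V] by blast
    obtain j where j: "j < N + 1" "v $ j \<noteq> 0"
      using v eq_vecI[of v "0\<^sub>v (N + 1)"] by auto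
    have "0 < (\<Sum>j\<in>{0..<N + 1}. lgl_gram N j j * (v $ j)\<^sup>2)"
      using j lgl_gram_diag_pos[OF assms]
      by (intro sum_pos2[of _ j]) (simp_all add: less_imp_le)
    also have "\<dots> = (lgl_vandermonde N *\<^sub>v v) \<bullet> (lgl_mass N *\<^sub>v (lgl_vandermonde N *\<^sub>v v))"
      using lgl_mass_quadratic_form[OF assms v(1)] ..
    also have "\<dots> = 0"
      unfolding Vv using M by simp
    finally show False
      by simp
  qed
  then have unit: "lgl_vandermonde N \<in> Units (ring_mat TYPE(real) (N + 1) ())"
    by (rule det_non_zero_imp_unit[OF V])
  show ?thesis
  proof (cases "mat_inverse (lgl_vandermonde N)")
    case None
    then have "lgl_vandermonde N \<notin> Units (ring_mat TYPE(real) (N + 1) ())"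
      by (rule mat_inverse(1)[OF V])
    with unit show ?thesis
      by contradiction
  qed (rule that)
qed

lemma quadratic_form_transpose_mult_minus:
  fixes A M :: "'a::comm_ring_1 mat"
  assumes A: "A \<in> carrier_mat n n" and M: "M \<in> carrier_mat n n" and u: "u \<in> carrier_vec n"
  shows "u \<bullet> ((transpose_mat A * M * A - M) *\<^sub>v u) = (A *\<^sub>v u) \<bullet> (M *\<^sub>v (A *\<^sub>v u)) - u \<bullet> (M *\<^sub>v u)"
proof -
  have Au: "A *\<^sub>v u \<in> carrier_vec n" and MAu: "M *\<^sub>v (A *\<^sub>v u) \<in> carrier_vec n"
    and Mu: "M *\<^sub>v u \<in> carrier_vec n" and TMA: "transpose_mat A * M * A \<in> carrier_mat n n"
    using A M u by simp_all
  have "u \<bullet> ((transpose_mat A * M * A - M) *\<^sub>v u) = u \<bullet> ((transpose_mat A * M * A) *\<^sub>v u - M *\<^sub>v u)"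
    by (subst minus_mult_distrib_mat_vec[OF TMA M u]) rule
  also have "\<dots> = u \<bullet> ((transpose_mat A * M * A) *\<^sub>v u) - u \<bullet> (M *\<^sub>v u)"
    by (rule scalar_prod_minus_distrib[OF u mult_mat_vec_carrier[OF TMA u] Mu])
  also have "(transpose_mat A * M * A) *\<^sub>v u = (transpose_mat A * M) *\<^sub>v (A *\<^sub>v u)"
    by (rule assoc_mult_mat_vec) (use A M u in auto)
  also have "\<dots> = transpose_mat A *\<^sub>v (M *\<^sub>v (A *\<^sub>v u))"
    by (rule assoc_mult_mat_vec) (use A M u in auto)
  also have "u \<bullet> (transpose_mat A *\<^sub>v (M *\<^sub>v (A *\<^sub>v u))) = (transpose_mat A *\<^sub>v (M *\<^sub>v (A *\<^sub>v u))) \<bullet> u"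
    by (rule comm_scalar_prod[OF u]) (use A MAu in simp)
  also have "\<dots> = (M *\<^sub>v (A *\<^sub>v u)) \<bullet> (A *\<^sub>v u)"
    by (rule transpose_vec_mult_scalar[OF A u MAu])
  also have "\<dots> = (A *\<^sub>v u) \<bullet> (M *\<^sub>v (A *\<^sub>v u))"
    by (rule comm_scalar_prod[OF MAu Au])
  finally show ?thesis .
qed

lemma lgl_filter_quadratic_form:
  assumes "N \<ge> 1" "u \<in> carrier_vec (N + 1)" "mat_inverse (lgl_vandermonde N) = Some W"
  shows "u \<bullet> ((transpose_mat (filter_mat N \<sigma>) * lgl_mass N * filter_mat N \<sigma> - lgl_mass N) *\<^sub>v u)
    = (\<Sum>j\<in>{0..<N + 1}. lgl_gram N j j * ((\<sigma> j)\<^sup>2 - 1) * ((W *\<^sub>v u) $ j)\<^sup>2)"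
proof -
  define V where "V = lgl_vandermonde N"
  define C where "C = mat (N + 1) (N + 1) (\<lambda>(i, j). if i = j then \<sigma> i else (0::real))"
  define w where "w = W *\<^sub>v u"
  have V: "V \<in> carrier_mat (N + 1) (N + 1)" and C: "C \<in> carrier_mat (N + 1) (N + 1)"
    and M: "lgl_mass N \<in> carrier_mat (N + 1) (N + 1)"
    unfolding V_def lgl_vandermonde_def C_def lgl_mass_def by simp_all
  have VW: "V * W = 1\<^sub>m (N + 1)" and W: "W \<in> carrier_mat (N + 1) (N + 1)"
    using mat_inverse(2)[OF V] assms(3) unfolding V_def by auto
  have w: "w \<in> carrier_vec (N + 1)" and Cw: "C *\<^sub>v w \<in> carrier_vec (N + 1)"
    using W C assms(2) unfolding w_def by simp_all
  have F: "filter_mat N \<sigma> = V * C * W"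
    unfolding filter_mat_def V_def C_def assms(3) by simp
  have "u = (V * W) *\<^sub>v u"
    using assms(2) unfolding VW by simp
  also have "\<dots> = V *\<^sub>v w"
    unfolding w_def by (rule assoc_mult_mat_vec) (use V W assms(2) in auto)
  finally have u_eq: "u = V *\<^sub>v w" .
  have "filter_mat N \<sigma> *\<^sub>v u = (V * C) *\<^sub>v (W *\<^sub>v u)"
    unfolding F by (rule assoc_mult_mat_vec) (use V C W assms(2) in auto)
  also have "\<dots> = V *\<^sub>v (C *\<^sub>v w)"
    unfolding w_def by (rule assoc_mult_mat_vec) (use V C W assms(2) in auto)
  finally have Fu: "filter_mat N \<sigma> *\<^sub>v u = V *\<^sub>v (C *\<^sub>v w)" .
  have Cw_index: "(C *\<^sub>v w) $ j = \<sigma> j * w $ j" if "j < N + 1" for j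
    unfolding C_def using that w by (rule diagonal_mat_mult_vec_index)
  have "u \<bullet> ((transpose_mat (filter_mat N \<sigma>) * lgl_mass N * filter_mat N \<sigma> - lgl_mass N) *\<^sub>v u)
      = (V *\<^sub>v (C *\<^sub>v w)) \<bullet> (lgl_mass N *\<^sub>v (V *\<^sub>v (C *\<^sub>v w))) - (V *\<^sub>v w) \<bullet> (lgl_mass N *\<^sub>v (V *\<^sub>v w))"
    using quadratic_form_transpose_mult_minus[OF _ M assms(2), of "filter_mat N \<sigma>"] V C W
    unfolding Fu by (simp flip: u_eq add: F)
  also have "\<dots> = (\<Sum>j\<in>{0..<N + 1}. lgl_gram N j j * (\<sigma> j * w $ j)\<^sup>2)
      - (\<Sum>j\<in>{0..<N + 1}. lgl_gram N j j * (w $ j)\<^sup>2)"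
    unfolding V_def lgl_mass_quadratic_form[OF assms(1) Cw] lgl_mass_quadratic_form[OF assms(1) w]
    by (simp add: Cw_index)
  also have "\<dots> = (\<Sum>j\<in>{0..<N + 1}. lgl_gram N j j * ((\<sigma> j)\<^sup>2 - 1) * ((W *\<^sub>v u) $ j)\<^sup>2)"
    unfolding w_def sum_subtractf[symmetric] by (rule sum.cong) (simp_all add: algebra_simps power_mult_distrib)
  finally show ?thesis .
qed

theorem proposition2:
  fixes N :: nat and \<sigma> :: "nat \<Rightarrow> real"
  assumes "N \<ge> 1"
    and "\<And>i. i \<le> N \<Longrightarrow> 0 \<le> \<sigma> i \<and> \<sigma> i \<le> 1"
    and "\<sigma> N = 0"
  shows "\<forall>u \<in> carrier_vec (N + 1).
           u \<bullet> ((transpose_mat (filter_mat N \<sigma>) * lgl_mass N * filter_mat N \<sigma> - lgl_mass N) *\<^sub>v u) \<le> 0"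
proof
  fix u :: "real vec" assume u: "u \<in> carrier_vec (N + 1)"
  obtain W where W: "mat_inverse (lgl_vandermonde N) = Some W"
    using lgl_vandermonde_invertible[OF assms(1)] .
  have "lgl_gram N j j * ((\<sigma> j)\<^sup>2 - 1) * ((W *\<^sub>v u) $ j)\<^sup>2 \<le> 0" if "j \<in> {0..<N + 1}" for j
  proof -
    have "(\<sigma> j)\<^sup>2 \<le> 1"
      using assms(2)[of j] that by (simp add: abs_square_le_1)
    then have "lgl_gram N j j * ((\<sigma> j)\<^sup>2 - 1) \<le> 0"
      using lgl_gram_diag_pos[OF assms(1), of j] by (intro mult_nonneg_nonpos) auto
    then show ?thesis
      by (rule mult_nonpos_nonneg) simp
  qed
  then show "u \<bullet> ((transpose_mat (filter_mat N \<sigma>) * lgl_mass N * filter_mat N \<sigma> - lgl_mass N) *\<^sub>v u) \<le> 0"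
    unfolding lgl_filter_quadratic_form[OF assms(1) u W] by (rule sum_nonpos)
qed

end
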